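(* Let $\gamma_a,\gamma_s>0$, $\sigma_B>0$, $q>0$, $\lambda>0$ and $\varepsilon_a\in(0,1]$. For $T_s\ge0$ let $T_a^{(1)}(T_s)$ be the unique $T_a\ge0$ such that $\lambda T_a+2\varepsilon_a\sigma_B T_a^4=\lambda T_s+\varepsilon_a\sigma_B T_s^4$, and define \[ \Phi(T_s)=\frac{\lambda}{2}\big(T_s-T_a^{(1)}(T_s)\big)+\sigma_B\Big(1-\frac{\varepsilon_a}{2}\Big)T_s^4,\qquad T_s\ge0. \] Then $\Phi$ is strictly increasing and strictly convex on $[0,+\infty)$. Consequently, if $\beta_s$ is the piecewise linear coalbedo described in the context, the system \[ \gamma_a T_a'=-\lambda(T_a-T_s)+\varepsilon_a\sigma_B|T_s|^3T_s-2\varepsilon_a\sigma_B|T_a|^3T_a,\qquad \gamma_s T_s'=-\lambda(T_s-T_a)-\sigma_B|T_s|^3T_s+\varepsilon_a\sigma_B|T_a|^3T_a+q\beta_s(T_s) \] has at most three equilibrium points.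
   Context: The coalbedo is $\beta_s(T)=\beta_{s,-}$ for $T\le T_{s,-}$, $\beta_s(T)=\beta_{s,-}+(\beta_{s,+}-\beta_{s,-})\frac{T-T_{s,-}}{T_{s,+}-T_{s,-}}$ for $T\in[T_{s,-},T_{s,+}]$, and $\beta_s(T)=\beta_{s,+}$ for $T\ge T_{s,+}$, where $T_{s,+}>T_{s,-}>0$ and $\beta_{s,+}>\beta_{s,-}>0$. An equilibrium point is a point $(T_a,T_s)\in[0,\infty)^2$ at which both right-hand sides vanish. *)

theory Defs
  imports "HOL-Analysis.Analysis"
begin

definition strictly_convex_on :: "real set \<Rightarrow> (real \<Rightarrow> real) \<Rightarrow> bool" where
  "strictly_convex_on S f \<longleftrightarrow> convex S \<and>
    (\<forall>x\<in>S. \<forall>y\<in>S. x \<noteq> y \<longrightarrow>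
       (\<forall>u::real. 0 < u \<and> u < 1 \<longrightarrow> f ((1 - u) * x + u * y) < (1 - u) * f x + u * f y))"

definition coalbedo :: "real \<Rightarrow> real \<Rightarrow> real \<Rightarrow> real \<Rightarrow> real \<Rightarrow> real" where
  "coalbedo Tm Tp bm bp T =
     (if T \<le> Tm then bm
      else if T \<le> Tp then bm + (bp - bm) * (T - Tm) / (Tp - Tm)
      else bp)"

definition Ta1 :: "real \<Rightarrow> real \<Rightarrow> real \<Rightarrow> real \<Rightarrow> real" where
  "Ta1 lam eps sig Ts =
     (THE Ta. Ta \<ge> 0 \<and> lam * Ta + 2 * eps * sig * Ta ^ 4 = lam * Ts + eps * sig * Ts ^ 4)"

definition Phi :: "real \<Rightarrow> real \<Rightarrow> real \<Rightarrow> real \<Rightarrow> real" where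
  "Phi lam eps sig Ts = lam / 2 * (Ts - Ta1 lam eps sig Ts) + sig * (1 - eps / 2) * Ts ^ 4"

definition rhs_a :: "real \<Rightarrow> real \<Rightarrow> real \<Rightarrow> real \<Rightarrow> real \<Rightarrow> real \<Rightarrow> real" where
  "rhs_a ga lam eps sig Ta Ts =
     (- lam * (Ta - Ts) + eps * sig * \<bar>Ts\<bar> ^ 3 * Ts - 2 * eps * sig * \<bar>Ta\<bar> ^ 3 * Ta) / ga"

definition rhs_s :: "real \<Rightarrow> real \<Rightarrow> real \<Rightarrow> real \<Rightarrow> real \<Rightarrow> (real \<Rightarrow> real) \<Rightarrow> real \<Rightarrow> real \<Rightarrow> real" where
  "rhs_s gs lam eps sig q beta Ta Ts =
     (- lam * (Ts - Ta) - sig * \<bar>Ts\<bar> ^ 3 * Ts + eps * sig * \<bar>Ta\<bar> ^ 3 * Ta + q * beta Ts) / gs"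

end

theory Submission
  imports Defs
begin

text \<open>An equilibrium has \<open>T\<^sub>a = Ta1(T\<^sub>s)\<close> by the first equation, and then the second one
  reads \<open>\<Phi>(T\<^sub>s) = q \<beta>\<^sub>s(T\<^sub>s)\<close>. The defining equation of \<open>Ta1\<close> turns \<open>\<Phi>\<close> into
  \<open>\<epsilon>\<sigma> Ta1\<^sup>4 + \<sigma>(1 - \<epsilon>) T\<^sub>s\<^sup>4\<close>, and \<open>Ta1\<^sup>4\<close> is strictly convex: if it failed at a convex
  combination, monotonicity of \<open>a \<mapsto> \<lambda>a + 2\<epsilon>\<sigma>a\<^sup>4\<close> and convexity of \<open>a\<^sup>4\<close> would contradict
  strict convexity of \<open>s \<mapsto> \<lambda>s + \<epsilon>\<sigma>s\<^sup>4\<close>. Hence \<open>\<Phi> - q\<beta>\<^sub>s\<close> is strictly increasing where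
  \<open>\<beta>\<^sub>s\<close> is constant and strictly convex where \<open>\<beta>\<^sub>s\<close> is affine, which leaves room for at
  most three zeros.\<close>

lemma strictly_convex_on_cong:
  assumes f: "strictly_convex_on S f" and eq: "\<And>x. x \<in> S \<Longrightarrow> f x = g x"
  shows "strictly_convex_on S g"
  unfolding strictly_convex_on_def
proof (intro conjI ballI impI allI)
  show "convex S"
    using f unfolding strictly_convex_on_def by simp
  fix x y u :: real
  assume "x \<in> S" "y \<in> S" "x \<noteq> y" "0 < u \<and> u < 1"
  moreover from this have "(1 - u) * x + u * y \<in> S"
    using \<open>convex S\<close> convex_alt[of S] by simp
  ultimately show "g ((1 - u) * x + u * y) < (1 - u) * g x + u * g y"
    using f eq unfolding strictly_convex_on_def by metis
qed

lemma strictly_convex_on_subset: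
  "strictly_convex_on T f \<Longrightarrow> S \<subseteq> T \<Longrightarrow> convex S \<Longrightarrow> strictly_convex_on S f"
  unfolding strictly_convex_on_def by blast

lemma strictly_convex_on_cmul:
  assumes "0 < c" and f: "strictly_convex_on S f"
  shows "strictly_convex_on S (\<lambda>x. c * f x)"
  unfolding strictly_convex_on_def
proof (intro conjI ballI impI allI)
  show "convex S"
    using f unfolding strictly_convex_on_def by simp
  fix x y u :: real
  assume "x \<in> S" "y \<in> S" "x \<noteq> y" "0 < u \<and> u < 1"
  then have "c * f ((1 - u) * x + u * y) < c * ((1 - u) * f x + u * f y)"
    using f \<open>0 < c\<close> unfolding strictly_convex_on_def by simp
  then show "c * f ((1 - u) * x + u * y) < (1 - u) * (c * f x) + u * (c * f y)"
    by (simp add: algebra_simps)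
qed

lemma strictly_convex_on_add_convex:
  assumes "strictly_convex_on S f" "convex_on S g"
  shows "strictly_convex_on S (\<lambda>x. f x + g x)"
  unfolding strictly_convex_on_def
proof (intro conjI ballI impI allI)
  show "convex S"
    using assms(1) unfolding strictly_convex_on_def by simp
  fix x y u :: real
  assume "x \<in> S" "y \<in> S" "x \<noteq> y" "0 < u \<and> u < 1"
  then have "f ((1 - u) * x + u * y) < (1 - u) * f x + u * f y"
    and "g ((1 - u) * x + u * y) \<le> (1 - u) * g x + u * g y"
    using assms convex_onD[of S g u x y] unfolding strictly_convex_on_def by auto
  then show "f ((1 - u) * x + u * y) + g ((1 - u) * x + u * y)
      < (1 - u) * (f x + g x) + u * (f y + g y)"
    by (simp add: algebra_simps)
qed

lemma strictly_convex_on_three_points: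
  assumes f: "strictly_convex_on S f"
    and "x \<in> S" "z \<in> S" "x < y" "y < z"
  shows "(z - x) * f y < (z - y) * f x + (y - x) * f z"
proof -
  define u where "u = (y - x) / (z - x)"
  have u: "0 < u" "u < 1" and u_scaled: "u * (z - x) = y - x" "(1 - u) * (z - x) = z - y"
    using assms unfolding u_def by (auto simp: field_simps)
  then have y_eq: "y = (1 - u) * x + u * z"
    by (simp add: algebra_simps)
  have "f y < (1 - u) * f x + u * f z"
    using f assms u unfolding y_eq strictly_convex_on_def by auto
  then have "(z - x) * f y < (z - x) * ((1 - u) * f x + u * f z)"
    using assms by (intro mult_strict_left_mono) auto
  also have "\<dots> = ((1 - u) * (z - x)) * f x + (u * (z - x)) * f z"
    by (simp add: algebra_simps)
  also have "\<dots> = (z - y) * f x + (y - x) * f z"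
    unfolding u_scaled ..
  finally show ?thesis .
qed

lemma convex_on_affine_function:
  fixes S :: "real set"
  assumes "convex S" "\<And>x. x \<in> S \<Longrightarrow> f x = m * x + c"
  shows "convex_on S f"
proof (rule convex_onI)
  fix t x y :: real
  assume "0 < t" "t < 1" "x \<in> S" "y \<in> S"
  moreover from this have "(1 - t) *\<^sub>R x + t *\<^sub>R y \<in> S"
    using assms(1) convex_alt[of S] by auto
  ultimately show "f ((1 - t) *\<^sub>R x + t *\<^sub>R y) \<le> (1 - t) * f x + t * f y"
    using assms(2) by (simp add: algebra_simps)
qed (fact assms(1))

lemma strictly_convex_power4: "strictly_convex_on UNIV (\<lambda>x::real. x ^ 4)"
  unfolding strictly_convex_on_def
proof (intro conjI ballI impI allI)
  fix x y u :: real
  assume "x \<noteq> y" "0 < u \<and> u < 1"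
  define m where "m = (1 - u) * x + u * y"
  define P where "P = (1 - u) * x\<^sup>2 + u * y\<^sup>2"
  have "P - m\<^sup>2 = u * (1 - u) * (x - y)\<^sup>2"
    unfolding P_def m_def by (simp add: algebra_simps power2_eq_square)
  moreover have "u * (1 - u) * (x - y)\<^sup>2 > 0"
    using \<open>x \<noteq> y\<close> \<open>0 < u \<and> u < 1\<close> by simp
  ultimately have "(m\<^sup>2)\<^sup>2 < P\<^sup>2"
    by (intro power_strict_mono) auto
  moreover have "(1 - u) * x ^ 4 + u * y ^ 4 - P\<^sup>2 = u * (1 - u) * (x\<^sup>2 - y\<^sup>2)\<^sup>2"
    unfolding P_def by (simp add: algebra_simps power2_eq_square power4_eq_xxxx)
  moreover have "u * (1 - u) * (x\<^sup>2 - y\<^sup>2)\<^sup>2 \<ge> 0"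
    using \<open>0 < u \<and> u < 1\<close> by simp
  ultimately show "((1 - u) * x + u * y) ^ 4 < (1 - u) * x ^ 4 + u * y ^ 4"
    unfolding m_def by simp
qed simp

lemma strict_mono_on_linear_plus_quartic:
  fixes lam c :: real
  assumes "0 < lam" "0 \<le> c"
  shows "strict_mono_on {0..} (\<lambda>a. lam * a + c * a ^ 4)"
proof (rule strict_mono_onI)
  fix a b :: real
  assume "a \<in> {0..}" "a < b"
  then have "c * a ^ 4 \<le> c * b ^ 4"
    using assms(2) by (intro mult_left_mono power_mono) auto
  moreover have "lam * a < lam * b"
    using assms(1) \<open>a < b\<close> by simp
  ultimately show "lam * a + c * a ^ 4 < lam * b + c * b ^ 4"
    by simp
qed

lemma card_le_3_if_no_increasing_4_chain:
  fixes Z :: "'a::linorder set"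
  assumes no_chain: "\<And>z1 z2 z3 z4. z1 \<in> Z \<Longrightarrow> z2 \<in> Z \<Longrightarrow> z3 \<in> Z \<Longrightarrow> z4 \<in> Z
      \<Longrightarrow> z1 < z2 \<Longrightarrow> z2 < z3 \<Longrightarrow> z3 < z4 \<Longrightarrow> False"
  shows "finite Z \<and> card Z \<le> 3"
proof (rule ccontr)
  assume not_le_3: "\<not> (finite Z \<and> card Z \<le> 3)"
  obtain F where F: "F \<subseteq> Z" "card F = 4" "finite F"
  proof (cases "finite Z")
    case True
    then have "4 \<le> card Z"
      using not_le_3 by simp
    then show ?thesis
      using obtain_subset_with_card_n that by metis
  next
    case False
    then show ?thesis
      using infinite_arbitrarily_large that by metis
  qed
  define l where "l = sorted_list_of_set F"
  have "length l = 4" "set l = F" "sorted_wrt (<) l"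
    unfolding l_def using F by simp_all
  then have "l ! i < l ! j" if "i < j" "j < 4" for i j
    using that unfolding sorted_wrt_iff_nth_less by auto
  moreover have "l ! i \<in> Z" if "i < 4" for i
    using that F(1) nth_mem[of i l] \<open>length l = 4\<close> \<open>set l = F\<close> by auto
  ultimately show False
    using no_chain[of "l ! 0" "l ! 1" "l ! 2" "l ! 3"] by simp
qed

lemma card_zeros_le_3_if_increasing_convex_increasing:
  fixes g :: "real \<Rightarrow> real"
  assumes mono_left: "strict_mono_on {a..b} g"
    and convex_mid: "strictly_convex_on {b..c} g"
    and mono_right: "strict_mono_on {c..} g"
  shows "finite {x. a \<le> x \<and> g x = 0} \<and> card {x. a \<le> x \<and> g x = 0} \<le> 3"
proof (rule card_le_3_if_no_increasing_4_chain)
  fix z1 z2 z3 z4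
  assume "z1 \<in> {x. a \<le> x \<and> g x = 0}" "z2 \<in> {x. a \<le> x \<and> g x = 0}"
    "z3 \<in> {x. a \<le> x \<and> g x = 0}" "z4 \<in> {x. a \<le> x \<and> g x = 0}"
    and z: "z1 < z2" "z2 < z3" "z3 < z4"
  then have "a \<le> z1" and zero: "g z1 = 0" "g z2 = 0" "g z3 = 0" "g z4 = 0"
    by auto
  have "b < z2"
    using strict_mono_onD[OF mono_left, of z1 z2] \<open>a \<le> z1\<close> z zero by force
  moreover have "z3 < c"
    using strict_mono_onD[OF mono_right, of z3 z4] z zero by force
  moreover have "c < z4"
    using strictly_convex_on_three_points[OF convex_mid, of z2 z4 z3] \<open>b < z2\<close> z zero
    by (cases "c < z4") auto
  \<comment> \<open>\<open>g c < 0\<close>, so strict convexity on \<open>[z2, c]\<close> would force \<open>g z3 < 0\<close>\<close>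
  ultimately have "(c - z2) * g z3 < (c - z3) * g z2 + (z3 - z2) * g c"
    "g c < g z4"
    using strictly_convex_on_three_points[OF convex_mid, of z2 c z3]
      strict_mono_onD[OF mono_right, of c z4] z by auto
  moreover have "(z3 - z2) * g c < 0"
    using calculation(2) z zero by (simp add: mult_pos_neg)
  ultimately show False
    using zero by simp
qed

lemma coalbedo_below: "T \<le> Tm \<Longrightarrow> coalbedo Tm Tp bm bp T = bm"
  unfolding coalbedo_def by simp

lemma coalbedo_above: "Tm < Tp \<Longrightarrow> Tp \<le> T \<Longrightarrow> coalbedo Tm Tp bm bp T = bp"
  unfolding coalbedo_def by auto

lemma coalbedo_affine:
  "Tm < Tp \<Longrightarrow> T \<in> {Tm..Tp} \<Longrightarrow>
    coalbedo Tm Tp bm bp T = bm + (bp - bm) / (Tp - Tm) * (T - Tm)"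
  unfolding coalbedo_def by auto

lemma convex_on_minus_coalbedo:
  assumes "Tm < Tp"
  shows "convex_on {Tm..Tp} (\<lambda>T. - q * coalbedo Tm Tp bm bp T)"
proof (rule convex_on_affine_function)
  define k where "k = (bp - bm) / (Tp - Tm)"
  fix T assume "T \<in> {Tm..Tp}"
  then show "- q * coalbedo Tm Tp bm bp T = - (q * k) * T + (q * k * Tm - q * bm)"
    using assms by (simp add: coalbedo_affine k_def[symmetric] algebra_simps)
qed simp

locale two_layer_model =
  fixes lam eps sig :: real
  assumes lam_pos: "0 < lam" and eps_pos: "0 < eps" and sig_pos: "0 < sig"
begin

abbreviation "ta \<equiv> Ta1 lam eps sig"
abbreviation "phi \<equiv> Phi lam eps sig"

lemma ta_ex1:
  assumes "0 \<le> s"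
  shows "\<exists>!a. 0 \<le> a \<and> lam * a + 2 * eps * sig * a ^ 4 = lam * s + eps * sig * s ^ 4"
proof -
  let ?h = "\<lambda>a. lam * a + 2 * eps * sig * a ^ 4"
  have "0 \<le> eps * sig * s ^ 4"
    using eps_pos sig_pos by simp
  then have "\<exists>a. 0 \<le> a \<and> a \<le> s \<and> ?h a = lam * s + eps * sig * s ^ 4"
    using assms lam_pos by (intro IVT') (auto intro!: continuous_intros)
  then obtain a where a: "0 \<le> a" "?h a = lam * s + eps * sig * s ^ 4"
    by blast
  have inj: "inj_on ?h {0..}"
    using lam_pos eps_pos sig_pos
    by (intro strict_mono_on_imp_inj_on strict_mono_on_linear_plus_quartic) auto
  show ?thesis
  proof (rule ex1I[of _ a])
    fix b
    assume "0 \<le> b \<and> ?h b = lam * s + eps * sig * s ^ 4"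
    then show "b = a"
      using inj_onD[OF inj, of b a] a by simp
  qed (use a in simp)
qed

lemma ta_nonneg_and_equation:
  assumes "0 \<le> s"
  shows "0 \<le> ta s \<and> lam * ta s + 2 * eps * sig * ta s ^ 4 = lam * s + eps * sig * s ^ 4"
  unfolding Ta1_def using theI'[OF ta_ex1[OF assms]] .

lemma ta_unique:
  assumes "0 \<le> s" "0 \<le> a" "lam * a + 2 * eps * sig * a ^ 4 = lam * s + eps * sig * s ^ 4"
  shows "ta s = a"
  unfolding Ta1_def using the1_equality[OF ta_ex1] assms by blast

lemma phi_eq:
  assumes "0 \<le> s"
  shows "phi s = eps * sig * ta s ^ 4 + sig * (1 - eps) * s ^ 4"
  using ta_nonneg_and_equation[OF assms] unfolding Phi_def by (simp add: field_simps)

lemma equilibrium_iff: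
  assumes "0 < ga" "0 < gs" "0 \<le> Ta" "0 \<le> Ts"
  shows "rhs_a ga lam eps sig Ta Ts = 0 \<and> rhs_s gs lam eps sig q beta Ta Ts = 0
    \<longleftrightarrow> Ta = ta Ts \<and> phi Ts = q * beta Ts"
proof -
  have "- lam * (Ta - Ts) + eps * sig * \<bar>Ts\<bar> ^ 3 * Ts - 2 * eps * sig * \<bar>Ta\<bar> ^ 3 * Ta
      = (lam * Ts + eps * sig * Ts ^ 4) - (lam * Ta + 2 * eps * sig * Ta ^ 4)"
    "- lam * (Ts - Ta) - sig * \<bar>Ts\<bar> ^ 3 * Ts + eps * sig * \<bar>Ta\<bar> ^ 3 * Ta + q * beta Ts
      = q * beta Ts - (lam * (Ts - Ta) + sig * Ts ^ 4 - eps * sig * Ta ^ 4)"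
    using assms(3,4) by (simp_all add: power3_eq_cube power4_eq_xxxx algebra_simps)
  then have a_iff: "rhs_a ga lam eps sig Ta Ts = 0
      \<longleftrightarrow> lam * Ta + 2 * eps * sig * Ta ^ 4 = lam * Ts + eps * sig * Ts ^ 4"
    and s_iff: "rhs_s gs lam eps sig q beta Ta Ts = 0
      \<longleftrightarrow> lam * (Ts - Ta) + sig * Ts ^ 4 - eps * sig * Ta ^ 4 = q * beta Ts"
    using assms(1,2) unfolding rhs_a_def rhs_s_def by auto
  have ta_iff: "lam * Ta + 2 * eps * sig * Ta ^ 4 = lam * Ts + eps * sig * Ts ^ 4
      \<longleftrightarrow> Ta = ta Ts"
    using ta_unique[OF assms(4,3)] ta_nonneg_and_equation[OF assms(4)] by auto
  have phi_ta: "lam * (Ts - ta Ts) + sig * Ts ^ 4 - eps * sig * ta Ts ^ 4 = phi Ts"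
    using ta_nonneg_and_equation[OF assms(4)] unfolding phi_eq[OF assms(4)]
    by (simp add: algebra_simps)
  show ?thesis
    unfolding a_iff s_iff ta_iff
  proof (cases "Ta = ta Ts")
    case True
    then show "Ta = ta Ts \<and> lam * (Ts - Ta) + sig * Ts ^ 4 - eps * sig * Ta ^ 4 = q * beta Ts
      \<longleftrightarrow> Ta = ta Ts \<and> phi Ts = q * beta Ts"
      using phi_ta by simp
  qed simp
qed

lemma ta_strict_mono: "strict_mono_on {0..} ta"
proof (rule strict_mono_onI)
  fix s t :: real
  assume "s \<in> {0..}" "s < t"
  have "strict_mono_on {0..} (\<lambda>a. lam * a + (2 * eps * sig) * a ^ 4)"
    "strict_mono_on {0..} (\<lambda>a. lam * a + (eps * sig) * a ^ 4)"
    using lam_pos eps_pos sig_pos by (auto intro!: strict_mono_on_linear_plus_quartic)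
  then show "ta s < ta t"
    using ta_nonneg_and_equation[of s] ta_nonneg_and_equation[of t] \<open>s \<in> {0..}\<close> \<open>s < t\<close>
      strict_mono_on_less[of "{0..}" "\<lambda>a. lam * a + (2 * eps * sig) * a ^ 4" "ta s" "ta t"]
      strict_mono_on_less[of "{0..}" "\<lambda>a. lam * a + (eps * sig) * a ^ 4" s t]
    by (simp add: mult.assoc)
qed

lemma ta_power4_strictly_convex: "strictly_convex_on {0..} (\<lambda>s. ta s ^ 4)"
  unfolding strictly_convex_on_def
proof (intro conjI ballI impI allI)
  fix x y u :: real
  assume x: "x \<in> {0..}" and y: "y \<in> {0..}" and "x \<noteq> y" and u: "0 < u \<and> u < 1"
  define m where "m = (1 - u) * x + u * y"
  define b where "b = (1 - u) * ta x + u * ta y"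
  define X where "X = (1 - u) * ta x ^ 4 + u * ta y ^ 4"
  have "0 \<le> m"
    using x y u unfolding m_def by simp
  note eq_x = ta_nonneg_and_equation[of x] and eq_y = ta_nonneg_and_equation[of y]
    and eq_m = ta_nonneg_and_equation[OF \<open>0 \<le> m\<close>]
  show "ta m ^ 4 < X"
  proof (rule ccontr)
    assume "\<not> ta m ^ 4 < X"
    moreover have "b ^ 4 \<le> X"
      using convex_onD[OF convex_power_even[of 4], of u "ta x" "ta y"] u
      unfolding b_def X_def by simp
    ultimately have "b ^ Suc 3 \<le> ta m ^ Suc 3"
      by simp
    then have "b \<le> ta m"
      using power_le_imp_le_base conjunct1[OF eq_m] by blast
    have "m ^ 4 < (1 - u) * x ^ 4 + u * y ^ 4"
      using strictly_convex_power4 \<open>x \<noteq> y\<close> u unfolding m_def strictly_convex_on_def by simp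
    then have "lam * m + eps * sig * m ^ 4 < lam * m + eps * sig * ((1 - u) * x ^ 4 + u * y ^ 4)"
      using eps_pos sig_pos by simp
    also have "\<dots> = (1 - u) * (lam * x + eps * sig * x ^ 4) + u * (lam * y + eps * sig * y ^ 4)"
      unfolding m_def by (simp add: algebra_simps)
    also have "\<dots> = (1 - u) * (lam * ta x + 2 * eps * sig * ta x ^ 4)
        + u * (lam * ta y + 2 * eps * sig * ta y ^ 4)"
      using eq_x eq_y x y by simp
    also have "\<dots> = lam * b + 2 * eps * sig * X"
      unfolding b_def X_def by (simp add: algebra_simps)
    also have "\<dots> \<le> lam * ta m + 2 * eps * sig * ta m ^ 4"
      using \<open>b \<le> ta m\<close> \<open>\<not> ta m ^ 4 < X\<close> lam_pos eps_pos sig_pos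
      by (intro add_mono mult_left_mono) auto
    finally show False
      using eq_m by simp
  qed
qed (rule convex_real_interval)

end

locale two_layer_model_eps_le_1 = two_layer_model +
  assumes eps_le_1: "eps \<le> 1"
begin

lemma phi_strict_mono: "strict_mono_on {0..} phi"
proof (rule strict_mono_onI)
  fix s t :: real
  assume "s \<in> {0..}" "s < t"
  then have "ta s ^ 4 < ta t ^ 4"
    using strict_mono_onD[OF ta_strict_mono] ta_nonneg_and_equation[of s]
    by (intro power_strict_mono) auto
  then have "eps * sig * ta s ^ 4 < eps * sig * ta t ^ 4"
    using eps_pos sig_pos by simp
  moreover have "sig * (1 - eps) * s ^ 4 \<le> sig * (1 - eps) * t ^ 4"
    using \<open>s \<in> {0..}\<close> \<open>s < t\<close> sig_pos eps_le_1 by (intro mult_left_mono power_mono) auto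
  ultimately have "eps * sig * ta s ^ 4 + sig * (1 - eps) * s ^ 4
      < eps * sig * ta t ^ 4 + sig * (1 - eps) * t ^ 4"
    by simp
  then show "phi s < phi t"
    using phi_eq \<open>s \<in> {0..}\<close> \<open>s < t\<close> by simp
qed

lemma phi_strictly_convex: "strictly_convex_on {0..} phi"
proof -
  have "strictly_convex_on {0..} (\<lambda>s. eps * sig * ta s ^ 4 + sig * (1 - eps) * s ^ 4)"
  proof (rule strictly_convex_on_add_convex)
    show "strictly_convex_on {0..} (\<lambda>s. eps * sig * ta s ^ 4)"
      using strictly_convex_on_cmul[OF _ ta_power4_strictly_convex, of "eps * sig"]
        eps_pos sig_pos by (simp add: mult.assoc)
    show "convex_on {0..} (\<lambda>s. sig * (1 - eps) * s ^ 4)"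
      using sig_pos eps_le_1
      by (intro convex_on_cmul convex_on_subset[OF convex_power_even]) auto
  qed
  then show ?thesis
    by (rule strictly_convex_on_cong) (simp add: phi_eq)
qed

lemma card_solutions_phi_eq_coalbedo_le_3:
  assumes "0 < Tm" "Tm < Tp"
  shows "finite {s. 0 \<le> s \<and> phi s = q * coalbedo Tm Tp bm bp s}
    \<and> card {s. 0 \<le> s \<and> phi s = q * coalbedo Tm Tp bm bp s} \<le> 3"
proof -
  define g where "g s = phi s - q * coalbedo Tm Tp bm bp s" for s
  have "strict_mono_on {0..Tm} g"
    using strict_mono_onD[OF phi_strict_mono]
    by (intro strict_mono_onI) (auto simp: g_def coalbedo_below)
  moreover have "strictly_convex_on {Tm..Tp} g"
    using strictly_convex_on_add_convex[OF
        strictly_convex_on_subset[OF phi_strictly_convex] convex_on_minus_coalbedo] assms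
    unfolding g_def by simp
  moreover have "strict_mono_on {Tp..} g"
    using strict_mono_onD[OF phi_strict_mono] assms
    by (intro strict_mono_onI) (auto simp: g_def coalbedo_above)
  ultimately show ?thesis
    using card_zeros_le_3_if_increasing_convex_increasing[of 0 Tm g Tp]
    unfolding g_def by simp
qed

end

theorem lemma6p3:
  fixes ga gs sig q lam eps Tm Tp bm bp :: real
  assumes "ga > 0" "gs > 0" "sig > 0" "q > 0" "lam > 0"
    and "0 < eps" "eps \<le> 1"
    and "0 < Tm" "Tm < Tp" "0 < bm" "bm < bp"
  shows "strict_mono_on {0..} (Phi lam eps sig)
    \<and> strictly_convex_on {0..} (Phi lam eps sig)
    \<and> (let E = {(Ta, Ts). Ta \<ge> 0 \<and> Ts \<ge> 0
                  \<and> rhs_a ga lam eps sig Ta Ts = 0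
                  \<and> rhs_s gs lam eps sig q (coalbedo Tm Tp bm bp) Ta Ts = 0}
       in finite E \<and> card E \<le> 3)"
proof -
  interpret two_layer_model_eps_le_1 lam eps sig
    using assms by unfold_locales auto
  define Z where "Z = {s. 0 \<le> s \<and> phi s = q * coalbedo Tm Tp bm bp s}"
  define E where "E = {(Ta, Ts). Ta \<ge> 0 \<and> Ts \<ge> 0
                  \<and> rhs_a ga lam eps sig Ta Ts = 0
                  \<and> rhs_s gs lam eps sig q (coalbedo Tm Tp bm bp) Ta Ts = 0}"
  have "(Ta, Ts) \<in> E \<longleftrightarrow> (Ta, Ts) \<in> (\<lambda>s. (ta s, s)) ` Z" for Ta Ts
    using equilibrium_iff[OF assms(1,2), of Ta Ts] ta_nonneg_and_equation[of Ts]
    unfolding E_def Z_def by auto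
  then have "E = (\<lambda>s. (ta s, s)) ` Z"
    by auto
  moreover have "finite Z \<and> card Z \<le> 3"
    unfolding Z_def by (rule card_solutions_phi_eq_coalbedo_le_3[OF assms(8,9)])
  ultimately have "finite E \<and> card E \<le> 3"
    using card_image_le[of Z "\<lambda>s. (ta s, s)"] by auto
  then show ?thesis
    unfolding Let_def E_def[symmetric] using phi_strict_mono phi_strictly_convex by blast
qed

end
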